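(* Fix $\mu \in \mathcal{X}$ and let $P_X$ be a probability distribution on $\mathcal{X}$ with $P_X(\{ \mu \}) = 0$. Let $(P_n)$ be a sequence of probability distributions on $\mathcal{X}$ converging weakly to $P_X$. Then $D(\mu; P_n) \to D(\mu; P_X)$ as $n \to \infty$.
   Context: $(\mathcal{X}, d)$ is a complete separable metric space with its Borel $\sigma$-algebra. Define $h: \mathcal{X}^3 \to \mathbb{R}$ by $h(x_1, x_2, x_3) := \mathbb{I}( x_3 \notin \{x_1, x_2\} ) \dfrac{ d^2(x_1, x_3) + d^2(x_2, x_3) - d^2(x_1, x_2) }{d(x_1, x_3)\, d(x_2, x_3) }$, where $h := 0$ when $x_3 \in \{x_1,x_2\}$. The metric spatial depth of $\mu \in \mathcal{X}$ with respect to a probability distribution $P_X$ on $\mathcal{X}$ is $D(\mu; P_X) := 1 - \frac{1}{2} \mathrm{E} \{ h(X_1, X_2, \mu) \}$, where $X_1, X_2 \sim P_X$ are independent. *)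

theory Defs
  imports "HOL-Probability.Probability"
begin

definition msd_h :: "'a::metric_space \<Rightarrow> 'a \<Rightarrow> 'a \<Rightarrow> real" where
  "msd_h x1 x2 x3 =
     (if x3 \<notin> {x1, x2}
      then ((dist x1 x3)\<^sup>2 + (dist x2 x3)\<^sup>2 - (dist x1 x2)\<^sup>2) / (dist x1 x3 * dist x2 x3)
      else 0)"

definition metric_spatial_depth :: "'a::metric_space \<Rightarrow> 'a measure \<Rightarrow> real" where
  "metric_spatial_depth mu P =
     1 - 1/2 * (\<integral>z. msd_h (fst z) (snd z) mu \<partial>(P \<Otimes>\<^sub>M P))"

definition weak_conv_metric :: "(nat \<Rightarrow> 'a::metric_space measure) \<Rightarrow> 'a measure \<Rightarrow> bool" where
  "weak_conv_metric Ps P \<longleftrightarrow>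
     (\<forall>f :: 'a \<Rightarrow> real. continuous_on UNIV f \<and> bounded (range f) \<longrightarrow>
        (\<lambda>n. \<integral>x. f x \<partial>(Ps n)) \<longlonglongrightarrow> (\<integral>x. f x \<partial>P))"

end

theory Submission
  imports Defs
begin

text \<open>The kernel \<open>h(x\<^sub>1, x\<^sub>2, mu)\<close> is bounded by 2 (law of cosines and the triangle inequality)
  but discontinuous where \<open>x\<^sub>1\<close> or \<open>x\<^sub>2\<close> equals \<open>mu\<close>. Truncating the two distances to \<open>mu\<close> in
  the denominator below at \<open>e\<close> gives a bounded continuous kernel that differs from \<open>h\<close> only
  when a point lies in the \<open>e\<close>-ball around \<open>mu\<close>; the integrated error is at most 8 times the
  integral of a continuous bump around \<open>mu\<close>, which is small for \<open>P\<close> because \<open>P{mu} = 0\<close>, hence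
  also for \<open>P\<^sub>n\<close> with \<open>n\<close> large. The truncated kernel is uniformly continuous in its second
  argument, uniformly in the first, so its partial integrals against \<open>P\<^sub>n\<close> form a uniformly
  equicontinuous sequence converging pointwise; on a separable space such a sequence also
  integrates correctly against \<open>P\<^sub>n\<close>, which gives convergence of the integrals over
  \<open>P\<^sub>n \<Otimes> P\<^sub>n\<close>.\<close>

section \<open>Law-of-cosines estimates\<close>

lemma dist_triangle_sides:
  fixes x y mu :: "'a::metric_space"
  shows "0 \<le> dist x mu" "0 \<le> dist y mu" "0 \<le> dist x y"
    "dist x y \<le> dist x mu + dist y mu" "dist x mu \<le> dist y mu + dist x y"
    "dist y mu \<le> dist x mu + dist x y"
  using dist_triangle[of x mu y] dist_triangle[of x y mu] dist_triangle[of y x mu]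
    dist_triangle[of y mu x]
  by (auto simp: dist_commute)

lemma abs_cosine_numerator_le:
  fixes a b c :: real
  assumes "0 \<le> a" "0 \<le> b" "0 \<le> c" "c \<le> a + b" "a \<le> b + c" "b \<le> a + c"
  shows "\<bar>a\<^sup>2 + b\<^sup>2 - c\<^sup>2\<bar> \<le> 2 * a * b"
proof -
  have "c\<^sup>2 \<le> (a + b)\<^sup>2" using assms by (intro power_mono) auto
  moreover have "\<bar>a - b\<bar>\<^sup>2 \<le> c\<^sup>2" using assms by (intro power_mono) auto
  ultimately show ?thesis
    unfolding abs_le_iff power2_abs by (simp add: power2_eq_square algebra_simps)
qed

lemma abs_cosine_ratio_cut_le:
  fixes a b c e :: real
  assumes "0 \<le> a" "0 \<le> b" "0 \<le> c" "c \<le> a + b" "a \<le> b + c" "b \<le> a + c" "0 < e"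
  shows "\<bar>(a\<^sup>2 + b\<^sup>2 - c\<^sup>2) / (max a e * max b e)\<bar> \<le> 2"
proof -
  have pos: "0 < max a e * max b e" using assms by auto
  have "\<bar>a\<^sup>2 + b\<^sup>2 - c\<^sup>2\<bar> \<le> 2 * a * b" using assms by (intro abs_cosine_numerator_le)
  also have "\<dots> \<le> 2 * (max a e * max b e)" using assms by (simp add: mult_mono)
  finally show ?thesis using pos by (simp add: abs_divide divide_le_eq)
qed

lemma abs_square_diff_eq:
  fixes b b' :: real
  assumes "0 \<le> b" "0 \<le> b'"
  shows "\<bar>b\<^sup>2 - b'\<^sup>2\<bar> = \<bar>b - b'\<bar> * (b + b')"
proof -
  have "b\<^sup>2 - b'\<^sup>2 = (b - b') * (b + b')" by (simp add: power2_eq_square algebra_simps)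
  then show ?thesis using assms by (simp add: abs_mult)
qed

lemma cosine_numerator_diff_le:
  fixes a b c b' c' d :: real
  assumes "0 \<le> b" "0 \<le> b'" "0 \<le> c" "0 \<le> c'" "c \<le> a + b"
    and "\<bar>b - b'\<bar> \<le> d" "\<bar>c - c'\<bar> \<le> d"
  shows "\<bar>(a\<^sup>2 + b\<^sup>2 - c\<^sup>2) - (a\<^sup>2 + b'\<^sup>2 - c'\<^sup>2)\<bar> \<le> d * (2*a + 4*b + 2*d)"
proof -
  have "\<bar>b\<^sup>2 - b'\<^sup>2\<bar> \<le> d * (2*b + d)"
    unfolding abs_square_diff_eq[OF assms(1,2)] using assms by (intro mult_mono) auto
  moreover have "\<bar>c\<^sup>2 - c'\<^sup>2\<bar> \<le> d * (2*a + 2*b + d)"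
    unfolding abs_square_diff_eq[OF assms(3,4)] using assms by (intro mult_mono) auto
  ultimately show ?thesis by (simp add: abs_le_iff algebra_simps)
qed

lemma cosine_numerator_bound_over_cut_le:
  fixes a b d e :: real
  assumes "0 \<le> a" "0 \<le> b" "0 \<le> d" "d \<le> e" "0 < e"
  shows "d * (2*a + 4*b + 2*d) / (max a e * max b e) \<le> 8 * d / e"
proof -
  define A B where "A = max a e" and "B = max b e"
  have "a * e \<le> A * B" "e * b \<le> A * B" "e * d \<le> A * B"
    unfolding A_def B_def using assms by (auto intro!: mult_mono)
  then have "e * (2*a + 4*b + 2*d) \<le> 8 * (A * B)" by (simp add: algebra_simps)
  then have "d * (e * (2*a + 4*b + 2*d)) \<le> d * (8 * (A * B))" using assms(3)
    by (rule mult_left_mono)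
  moreover have "0 < A * B" using assms by (simp add: A_def B_def)
  ultimately show ?thesis using assms unfolding A_def[symmetric] B_def[symmetric]
    by (simp add: divide_simps ac_simps)
qed

lemma cosine_ratio_cut_diff_le:
  fixes a b c b' c' e d :: real
  assumes "0 \<le> a" "0 \<le> b" "0 \<le> c" "c \<le> a + b" "a \<le> b + c" "b \<le> a + c"
    and "0 \<le> b'" "0 \<le> c'" "c' \<le> a + b'" "a \<le> b' + c'" "b' \<le> a + c'"
    and "0 < e" "\<bar>b - b'\<bar> \<le> d" "\<bar>c - c'\<bar> \<le> d" "d \<le> e"
  shows "\<bar>(a\<^sup>2 + b\<^sup>2 - c\<^sup>2) / (max a e * max b e) - (a\<^sup>2 + b'\<^sup>2 - c'\<^sup>2) / (max a e * max b' e)\<bar>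
    \<le> 10 * d / e"
proof -
  define A B B' N N' where "A = max a e" and "B = max b e" and "B' = max b' e"
    and "N = a\<^sup>2 + b\<^sup>2 - c\<^sup>2" and "N' = a\<^sup>2 + b'\<^sup>2 - c'\<^sup>2"
  have d: "0 \<le> d" using assms by linarith
  have pos: "0 < A" "0 < B" "0 < B'" using assms by (auto simp: A_def B_def B'_def)
  have "\<bar>(N - N') / (A * B)\<bar> \<le> d * (2*a + 4*b + 2*d) / (A * B)"
    using cosine_numerator_diff_le[of b b' c c' a d] assms pos
    by (simp add: N_def N'_def abs_divide divide_right_mono)
  also have "\<dots> \<le> 8 * d / e"
    unfolding A_def B_def using assms d by (intro cosine_numerator_bound_over_cut_le)
  finally have numerator: "\<bar>(N - N') / (A * B)\<bar> \<le> 8 * d / e" .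
  have "N' / (A * B) - N' / (A * B') = N' / (A * B') * ((B' - B) / B)"
    using pos by (simp add: divide_simps) (simp add: algebra_simps)
  then have "\<bar>N' / (A * B) - N' / (A * B')\<bar> = \<bar>N' / (A * B')\<bar> * \<bar>(B' - B) / B\<bar>"
    by (simp add: abs_mult)
  also have "\<dots> \<le> 2 * (d / e)"
  proof (rule mult_mono)
    show "\<bar>N' / (A * B')\<bar> \<le> 2"
      unfolding N'_def A_def B'_def using assms by (intro abs_cosine_ratio_cut_le)
    have "\<bar>B' - B\<bar> \<le> d" using assms(13) by (auto simp: B_def B'_def max_def)
    then have "\<bar>B' - B\<bar> / B \<le> d / B" using pos by (simp add: divide_right_mono)
    also have "\<dots> \<le> d / e" using d assms by (simp add: B_def divide_left_mono)
    finally show "\<bar>(B' - B) / B\<bar> \<le> d / e" using pos by (simp add: abs_divide)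
  qed auto
  finally have denominator: "\<bar>N' / (A * B) - N' / (A * B')\<bar> \<le> 2 * (d / e)" .
  have "N / (A * B) - N' / (A * B') = (N - N') / (A * B) + (N' / (A * B) - N' / (A * B'))"
    by (simp add: diff_divide_distrib)
  then have "\<bar>N / (A * B) - N' / (A * B')\<bar> \<le> 8 * d / e + 2 * (d / e)"
    using numerator denominator by linarith
  then show ?thesis by (simp add: A_def B_def B'_def N_def N'_def)
qed

section \<open>The kernel and its truncation\<close>

text \<open>A continuous stand-in for \<^const>\<open>msd_h\<close>: it agrees with it whenever both points are at
  distance at least \<open>e\<close> from \<open>mu\<close>.\<close>
definition msd_h_cut :: "'a::metric_space \<Rightarrow> real \<Rightarrow> 'a \<times> 'a \<Rightarrow> real" where
  "msd_h_cut mu e z =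
     ((dist (fst z) mu)\<^sup>2 + (dist (snd z) mu)\<^sup>2 - (dist (fst z) (snd z))\<^sup>2)
       / (max (dist (fst z) mu) e * max (dist (snd z) mu) e)"

definition ball_bump :: "'a::metric_space \<Rightarrow> real \<Rightarrow> 'a \<Rightarrow> real" where
  "ball_bump mu e x = min 1 (max 0 (2 - dist x mu / e))"

lemma abs_msd_h_le: "\<bar>msd_h x y mu\<bar> \<le> 2"
proof (cases "mu \<in> {x, y}")
  case False
  then have pos: "0 < dist x mu" "0 < dist y mu" by auto
  have "\<bar>(dist x mu)\<^sup>2 + (dist y mu)\<^sup>2 - (dist x y)\<^sup>2\<bar> \<le> 2 * dist x mu * dist y mu"
    by (intro abs_cosine_numerator_le dist_triangle_sides)
  then show ?thesis using False pos by (simp add: msd_h_def abs_divide divide_le_eq)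
qed (simp add: msd_h_def)

lemma borel_measurable_msd_h: "(\<lambda>z. msd_h (fst z) (snd z) mu) \<in> borel_measurable borel"
proof -
  define S where "S = {z. fst z \<noteq> mu \<and> snd z \<noteq> mu}"
  have "open S" unfolding S_def by (intro open_Collect_conj open_Collect_neq continuous_intros)
  then have S: "S \<inter> space borel \<in> sets borel" by simp
  have "(\<lambda>z. msd_h (fst z) (snd z) mu) = (\<lambda>z. if z \<in> S then
      ((dist (fst z) mu)\<^sup>2 + (dist (snd z) mu)\<^sup>2 - (dist (fst z) (snd z))\<^sup>2)
        / (dist (fst z) mu * dist (snd z) mu) else 0)"
    by (auto simp: S_def msd_h_def fun_eq_iff)
  then show ?thesis
    by (simp only:) (intro measurable_If_set S borel_measurable_const borel_measurable_divide
        borel_measurable_continuous_onI continuous_intros)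
qed

lemma abs_msd_h_cut_le: "0 < e \<Longrightarrow> \<bar>msd_h_cut mu e z\<bar> \<le> 2"
  unfolding msd_h_cut_def by (intro abs_cosine_ratio_cut_le dist_triangle_sides)

lemma continuous_on_msd_h_cut: "0 < e \<Longrightarrow> continuous_on UNIV (msd_h_cut mu e)"
  unfolding msd_h_cut_def by (intro continuous_intros continuous_on_divide) (auto simp: max_def)

lemma msd_h_cut_equicontinuous_snd:
  assumes e: "0 < e" and \<eta>: "0 < \<eta>"
  shows "\<exists>\<delta>>0. \<forall>x y y'. dist y y' < \<delta> \<longrightarrow> \<bar>msd_h_cut mu e (x, y) - msd_h_cut mu e (x, y')\<bar> \<le> \<eta>"
proof (intro exI[of _ "min e (\<eta> * e / 10)"] conjI allI impI)
  show "0 < min e (\<eta> * e / 10)" using e \<eta> by simp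
  fix x y y' :: 'a
  assume d: "dist y y' < min e (\<eta> * e / 10)"
  have "\<bar>msd_h_cut mu e (x, y) - msd_h_cut mu e (x, y')\<bar> \<le> 10 * dist y y' / e"
    unfolding msd_h_cut_def fst_conv snd_conv
    using d e dist_triangle[of y mu y'] dist_triangle[of y' mu y]
      dist_triangle[of x y y'] dist_triangle[of x y' y]
    by (intro cosine_ratio_cut_diff_le dist_triangle_sides) (auto simp: dist_commute)
  also have "\<dots> \<le> \<eta>" using d e by (simp add: divide_simps)
  finally show "\<bar>msd_h_cut mu e (x, y) - msd_h_cut mu e (x, y')\<bar> \<le> \<eta>" .
qed

lemma ball_bump_nonneg: "0 \<le> ball_bump mu e x"
  unfolding ball_bump_def by auto

lemma abs_ball_bump_le: "\<bar>ball_bump mu e x\<bar> \<le> 1"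
  unfolding ball_bump_def by auto

lemma continuous_on_ball_bump: "0 < e \<Longrightarrow> continuous_on UNIV (ball_bump mu e)"
  unfolding ball_bump_def by (intro continuous_intros) auto

lemma ball_bump_eq_1: "0 < e \<Longrightarrow> dist x mu < e \<Longrightarrow> ball_bump mu e x = 1"
  unfolding ball_bump_def by (simp add: divide_less_eq)

lemma ball_bump_eq_0: "0 < e \<Longrightarrow> 2 * e \<le> dist x mu \<Longrightarrow> ball_bump mu e x = 0"
  unfolding ball_bump_def by (simp add: le_divide_eq)

lemma ball_bump_tendsto_0:
  assumes "x \<noteq> mu"
  shows "(\<lambda>k. ball_bump mu (1 / Suc k) x) \<longlonglongrightarrow> 0"
proof (rule tendsto_eventually)
  obtain k0 :: nat where k0: "2 / dist x mu < k0" using reals_Archimedean2 by blast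
  have "ball_bump mu (1 / Suc k) x = 0" if "k0 \<le> k" for k
  proof (rule ball_bump_eq_0)
    have "2 < k0 * dist x mu" using k0 assms by (simp add: divide_less_eq)
    also have "\<dots> \<le> Suc k * dist x mu" using that by (intro mult_right_mono) auto
    finally have "2 < dist x mu * Suc k" by (simp add: mult.commute)
    then show "2 * (1 / real (Suc k)) \<le> dist x mu" by (simp add: divide_simps)
  qed simp
  then show "eventually (\<lambda>k. ball_bump mu (1 / Suc k) x = 0) sequentially"
    unfolding eventually_sequentially by blast
qed

lemma abs_msd_h_minus_cut_le:
  assumes e: "0 < e"
  shows "\<bar>msd_h (fst z) (snd z) mu - msd_h_cut mu e z\<bar>
    \<le> 4 * (ball_bump mu e (fst z) + ball_bump mu e (snd z))"
proof (cases "dist (fst z) mu < e \<or> dist (snd z) mu < e")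
  case True
  then have "1 \<le> ball_bump mu e (fst z) + ball_bump mu e (snd z)"
    using ball_bump_eq_1[OF e] ball_bump_nonneg[of mu e] by (smt (verit))
  then have "4 \<le> 4 * (ball_bump mu e (fst z) + ball_bump mu e (snd z))" by simp
  moreover have "\<bar>msd_h (fst z) (snd z) mu - msd_h_cut mu e z\<bar> \<le> 4"
    using abs_msd_h_le[of "fst z" "snd z" mu] abs_msd_h_cut_le[OF e, of mu z] by linarith
  ultimately show ?thesis by linarith
next
  case False
  then have "msd_h (fst z) (snd z) mu = msd_h_cut mu e z"
    using e by (auto simp: msd_h_def msd_h_cut_def max_def)
  then show ?thesis using ball_bump_nonneg[of mu e] by simp
qed

section \<open>Integrals over probability measures and their squares\<close>

lemma borel_measurable_sets_borel:
  "sets M = sets borel \<Longrightarrow> f \<in> borel_measurable borel \<Longrightarrow> f \<in> borel_measurable M"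
  using measurable_cong_sets[of M borel borel borel] by simp

lemma prob_space_integrable_bounded:
  fixes f :: "_ \<Rightarrow> real"
  assumes "prob_space M" "f \<in> borel_measurable M" "\<And>x. \<bar>f x\<bar> \<le> B"
  shows "integrable M f"
proof -
  interpret prob_space M by fact
  show ?thesis using assms by (intro integrable_const_bound[of f B]) auto
qed

lemma abs_integral_le_integral:
  fixes f g :: "_ \<Rightarrow> real"
  assumes "integrable M f" "integrable M g" "\<And>x. \<bar>f x\<bar> \<le> g x"
  shows "\<bar>integral\<^sup>L M f\<bar> \<le> integral\<^sup>L M g"
proof -
  have "\<bar>integral\<^sup>L M f\<bar> \<le> (\<integral>x. \<bar>f x\<bar> \<partial>M)" using integral_norm_bound[of M f] by simp
  also have "\<dots> \<le> integral\<^sup>L M g" using assms by (intro integral_mono) auto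
  finally show ?thesis .
qed

lemma prob_space_abs_integral_le:
  fixes f :: "_ \<Rightarrow> real"
  assumes "prob_space M" "f \<in> borel_measurable M" "\<And>x. \<bar>f x\<bar> \<le> B"
  shows "\<bar>integral\<^sup>L M f\<bar> \<le> B"
proof -
  interpret prob_space M by fact
  have "\<bar>integral\<^sup>L M f\<bar> \<le> integral\<^sup>L M (\<lambda>x. B)"
    using assms by (intro abs_integral_le_integral prob_space_integrable_bounded) auto
  then show ?thesis by (simp add: prob_space)
qed

lemma prob_space_integral_tendsto_0:
  fixes f :: "nat \<Rightarrow> _ \<Rightarrow> real"
  assumes "prob_space M" "\<And>m. f m \<in> borel_measurable M" "\<And>m x. \<bar>f m x\<bar> \<le> B"
    and "AE x in M. (\<lambda>m. f m x) \<longlonglongrightarrow> 0"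
  shows "(\<lambda>m. integral\<^sup>L M (f m)) \<longlonglongrightarrow> 0"
proof -
  interpret prob_space M by fact
  have "(\<lambda>m. integral\<^sup>L M (f m)) \<longlonglongrightarrow> (\<integral>x. 0 \<partial>M)"
    using assms by (intro integral_dominated_convergence[where w = "\<lambda>x. B"]) auto
  then show ?thesis by simp
qed

lemma sets_pair_measure_borel:
  "sets M = sets borel \<Longrightarrow>
    sets (M \<Otimes>\<^sub>M M) = sets (borel :: ('a::second_countable_topology \<times> 'a) measure)"
  using sets_pair_measure_cong[of M borel M borel] borel_prod by metis

lemma integral_pair_measure_iterated:
  fixes F :: "'a::second_countable_topology \<times> 'a \<Rightarrow> real"
  assumes M: "prob_space M" "sets M = sets borel"
    and F: "F \<in> borel_measurable borel" "\<And>z. \<bar>F z\<bar> \<le> B"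
  shows "(\<integral>z. F z \<partial>(M \<Otimes>\<^sub>M M)) = (\<integral>y. (\<integral>x. F (x, y) \<partial>M) \<partial>M)"
proof -
  interpret pair_prob_space M M
    using M by (simp add: pair_prob_space_def pair_sigma_finite_def prob_space_imp_sigma_finite)
  have "integrable (M \<Otimes>\<^sub>M M) F"
    using prob_space_pair[OF M(1) M(1)]
      borel_measurable_sets_borel[OF sets_pair_measure_borel[OF M(2)] F(1)] F(2)
    by (rule prob_space_integrable_bounded)
  then show ?thesis using integral_snd[of "\<lambda>x y. F (x, y)"] by simp
qed

lemma integral_pair_measure_marginals:
  fixes g :: "'a::second_countable_topology \<Rightarrow> real"
  assumes M: "prob_space M" "sets M = sets borel"
    and g: "g \<in> borel_measurable borel" "\<And>x. \<bar>g x\<bar> \<le> B"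
  shows "integrable (M \<Otimes>\<^sub>M M) (\<lambda>z. g (fst z) + g (snd z))"
    and "(\<integral>z. g (fst z) + g (snd z) \<partial>(M \<Otimes>\<^sub>M M)) = 2 * (\<integral>x. g x \<partial>M)"
proof -
  interpret prob_space M by fact
  have "fst \<in> borel_measurable (borel :: ('a \<times> 'a) measure)"
    "snd \<in> borel_measurable (borel :: ('a \<times> 'a) measure)"
    by (intro borel_measurable_continuous_onI continuous_intros)+
  then have meas: "(\<lambda>z. g (fst z) + g (snd z)) \<in> borel_measurable borel"
    using measurable_compose[OF _ g(1)] by (intro borel_measurable_add)
  have bound: "\<bar>g (fst z) + g (snd z)\<bar> \<le> 2 * B" for z
    using g(2)[of "fst z"] g(2)[of "snd z"] by linarith
  show "integrable (M \<Otimes>\<^sub>M M) (\<lambda>z. g (fst z) + g (snd z))"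
    using prob_space_pair[OF M(1) M(1)]
      borel_measurable_sets_borel[OF sets_pair_measure_borel[OF M(2)] meas] bound
    by (rule prob_space_integrable_bounded)
  have gM: "integrable M g"
    using M(1) borel_measurable_sets_borel[OF M(2) g(1)] g(2)
    by (rule prob_space_integrable_bounded)
  have "(\<integral>z. g (fst z) + g (snd z) \<partial>(M \<Otimes>\<^sub>M M)) = (\<integral>y. (\<integral>x. g x + g y \<partial>M) \<partial>M)"
    using integral_pair_measure_iterated[OF M meas bound] by simp
  also have "\<dots> = (\<integral>y. (\<integral>x. g x \<partial>M) + g y \<partial>M)"
    using gM by (simp add: prob_space)
  also have "\<dots> = 2 * (\<integral>x. g x \<partial>M)"
    using gM by (simp add: prob_space)
  finally show "(\<integral>z. g (fst z) + g (snd z) \<partial>(M \<Otimes>\<^sub>M M)) = 2 * (\<integral>x. g x \<partial>M)" .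
qed

section \<open>Weak convergence and product measures\<close>

lemma weak_conv_metric_tendsto:
  fixes f :: "'a::metric_space \<Rightarrow> real"
  assumes "weak_conv_metric Ps P" "continuous_on UNIV f" "\<And>x. \<bar>f x\<bar> \<le> B"
  shows "(\<lambda>n. \<integral>x. f x \<partial>Ps n) \<longlonglongrightarrow> (\<integral>x. f x \<partial>P)"
proof -
  have "bounded (range f)" using assms(3) unfolding bounded_iff by auto
  then show ?thesis using assms unfolding weak_conv_metric_def by blast
qed

lemma dense_sequence_exists:
  obtains q :: "nat \<Rightarrow> 'a::{metric_space, second_countable_topology}"
  where "\<And>x r. 0 < r \<Longrightarrow> \<exists>j. dist x (q j) < r"
proof -
  obtain D :: "'a set" where D: "countable D" "\<And>X. open X \<Longrightarrow> X \<noteq> {} \<Longrightarrow> \<exists>d\<in>D. d \<in> X"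
    using countable_dense_exists by blast
  have "\<exists>j. dist x (from_nat_into D j) < r" if "0 < r" for x r
  proof -
    obtain d where "d \<in> D" "d \<in> ball x r" using D(2)[of "ball x r"] \<open>0 < r\<close> by auto
    then show ?thesis using from_nat_into_surj[OF D(1)] by (metis mem_ball)
  qed
  then show ?thesis using that by blast
qed

lemma infdist_initial_segment_tendsto_0:
  assumes "\<And>x r. 0 < r \<Longrightarrow> \<exists>j. dist x (q j) < r"
  shows "(\<lambda>m. infdist x (q ` {..m})) \<longlonglongrightarrow> 0"
proof (rule LIMSEQ_I)
  fix r :: real
  assume "0 < r"
  then obtain j where j: "dist x (q j) < r" using assms by blast
  have "norm (infdist x (q ` {..m}) - 0) < r" if "j \<le> m" for m
    using infdist_le[of "q j" "q ` {..m}" x] infdist_nonneg[of x] that j by auto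
  then show "\<exists>m0. \<forall>m\<ge>m0. norm (infdist x (q ` {..m}) - 0) < r" by blast
qed

lemma infdist_less_imp_dist_less:
  assumes "finite A" "A \<noteq> {}" "infdist x A < \<delta>"
  shows "\<exists>a\<in>A. dist x a < \<delta>"
  using assms cINF_less_iff[of A "dist x" \<delta>]
  by (auto simp: infdist_notempty intro: bdd_belowI[of _ 0])

lemma abs_le_infdist_cutoff:
  fixes h :: "'a::metric_space \<Rightarrow> real"
  assumes A: "finite A" "A \<noteq> {}" and \<delta>: "0 < \<delta>"
    and osc: "\<And>x y. dist x y < \<delta> \<Longrightarrow> \<bar>h x - h y\<bar> \<le> \<eta>"
    and net: "\<And>a. a \<in> A \<Longrightarrow> \<bar>h a\<bar> \<le> \<eta>" and K: "\<And>x. \<bar>h x\<bar> \<le> K"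
  shows "\<bar>h x\<bar> \<le> 2 * \<eta> + K * min 1 (infdist x A / \<delta>)"
proof (cases "infdist x A < \<delta>")
  case True
  then obtain a where "a \<in> A" "dist x a < \<delta>" using infdist_less_imp_dist_less[OF A] by blast
  then have "\<bar>h x\<bar> \<le> 2 * \<eta>" using osc net by fastforce
  moreover have "0 \<le> K * min 1 (infdist x A / \<delta>)"
    using K[of x] \<delta> infdist_nonneg[of x A] by (intro mult_nonneg_nonneg) auto
  ultimately show ?thesis by linarith
next
  case False
  then have "min 1 (infdist x A / \<delta>) = 1" using \<delta> by (simp add: min_def)
  moreover have "0 \<le> \<eta>" using osc[of x x] \<delta> by simp
  ultimately show ?thesis using K[of x] by simp
qed

lemma weak_conv_equicontinuous_integral_tendsto_0:
  fixes H :: "nat \<Rightarrow> 'a::{metric_space, second_countable_topology} \<Rightarrow> real"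
  assumes P: "prob_space P" "sets P = sets borel"
    and Ps: "\<And>n. prob_space (Ps n)" "\<And>n. sets (Ps n) = sets borel"
    and weak: "weak_conv_metric Ps P"
    and bounded: "\<And>n x. \<bar>H n x\<bar> \<le> C" and meas: "\<And>n. H n \<in> borel_measurable borel"
    and equicont: "\<And>\<eta>. 0 < \<eta> \<Longrightarrow> \<exists>\<delta>>0. \<forall>n x y. dist x y < \<delta> \<longrightarrow> \<bar>H n x - H n y\<bar> \<le> \<eta>"
    and pointwise: "\<And>x. (\<lambda>n. H n x) \<longlonglongrightarrow> 0"
  shows "(\<lambda>n. \<integral>x. H n x \<partial>Ps n) \<longlonglongrightarrow> 0"
proof (rule tendstoI)
  fix r :: real
  assume r: "0 < r"
  define K where "K = max C 1"
  have K: "0 < K" "\<And>n x. \<bar>H n x\<bar> \<le> K" using bounded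
    by (auto simp: K_def intro: le_max_iff_disj[THEN iffD2])
  obtain \<delta> where \<delta>: "0 < \<delta>" and osc: "\<And>n x y. dist x y < \<delta> \<Longrightarrow> \<bar>H n x - H n y\<bar> \<le> r / 4"
    using equicont[of "r / 4"] r by auto
  obtain q :: "nat \<Rightarrow> 'a" where q: "\<And>x r. 0 < r \<Longrightarrow> \<exists>j. dist x (q j) < r"
    using dense_sequence_exists by blast
  \<comment> \<open>\<open>\<psi> m x < 1\<close> only within \<open>\<delta>\<close> of the first points of a dense sequence, where \<open>H n\<close> is
    eventually small; elsewhere only the bound \<open>K\<close> is used, weighted by \<open>\<integral>\<psi> m dP\<^sub>n\<close>, which
    is small by weak convergence.\<close>
  define \<psi> where "\<psi> m x = min 1 (infdist x (q ` {..m}) / \<delta>)" for m x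
  have \<psi>_cont: "continuous_on UNIV (\<psi> m)" for m
    unfolding \<psi>_def using \<delta> by (intro continuous_intros) auto
  have \<psi>_bound: "\<bar>\<psi> m x\<bar> \<le> 1" for m x
    using \<delta> infdist_nonneg[of x] unfolding \<psi>_def by auto
  have \<psi>_meas: "\<psi> m \<in> borel_measurable M" if "sets M = sets borel" for m and M :: "'a measure"
    using borel_measurable_sets_borel[OF that borel_measurable_continuous_onI[OF \<psi>_cont]] .
  have "(\<lambda>m. \<integral>x. \<psi> m x \<partial>P) \<longlonglongrightarrow> 0"
  proof (rule prob_space_integral_tendsto_0[OF P(1) \<psi>_meas[OF P(2)] \<psi>_bound])
    have "(\<lambda>m. \<psi> m x) \<longlonglongrightarrow> min 1 (0 / \<delta>)" for x
      unfolding \<psi>_def using \<delta> by (intro tendsto_intros infdist_initial_segment_tendsto_0 q) auto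
    then show "AE x in P. (\<lambda>m. \<psi> m x) \<longlonglongrightarrow> 0" by simp
  qed
  then have "eventually (\<lambda>m. (\<integral>x. \<psi> m x \<partial>P) < r / (4 * K)) sequentially"
    using r K by (intro order_tendstoD(2)) auto
  then obtain m where m: "(\<integral>x. \<psi> m x \<partial>P) < r / (4 * K)"
    using eventually_happens'[OF sequentially_bot] by blast
  have "eventually (\<lambda>n. (\<integral>x. \<psi> m x \<partial>Ps n) < r / (4 * K)) sequentially"
    using weak_conv_metric_tendsto[OF weak \<psi>_cont \<psi>_bound] m by (rule order_tendstoD)
  moreover have "eventually (\<lambda>n. \<forall>j\<in>{..m}. \<bar>H n (q j)\<bar> \<le> r / 4) sequentially"
  proof (intro eventually_ball_finite ballI)
    fix j
    show "eventually (\<lambda>n. \<bar>H n (q j)\<bar> \<le> r / 4) sequentially"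
      using tendstoD[OF pointwise[of "q j"], of "r / 4"] r by (auto elim: eventually_mono)
  qed simp
  ultimately show "eventually (\<lambda>n. dist (\<integral>x. H n x \<partial>Ps n) 0 < r) sequentially"
  proof eventually_elim
    case (elim n)
    interpret prob_space "Ps n" by (rule Ps(1))
    have H_le: "\<bar>H n x\<bar> \<le> 2 * (r / 4) + K * \<psi> m x" for x
      unfolding \<psi>_def using elim(2) \<delta> osc K(2)
      by (intro abs_le_infdist_cutoff[where h = "H n"]) auto
    have int_\<psi>: "integrable (Ps n) (\<psi> m)"
      using Ps(1) \<psi>_meas[OF Ps(2)] \<psi>_bound by (rule prob_space_integrable_bounded)
    have "integrable (Ps n) (H n)"
      using Ps(1) borel_measurable_sets_borel[OF Ps(2) meas] K(2)
      by (rule prob_space_integrable_bounded)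
    then have "\<bar>\<integral>x. H n x \<partial>Ps n\<bar> \<le> (\<integral>x. 2 * (r / 4) + K * \<psi> m x \<partial>Ps n)"
      using int_\<psi> H_le by (intro abs_integral_le_integral) auto
    also have "\<dots> = r / 2 + K * (\<integral>x. \<psi> m x \<partial>Ps n)"
      using int_\<psi> by (simp add: prob_space)
    also have "\<dots> < r / 2 + K * (r / (4 * K))"
      using mult_strict_left_mono[OF elim(1) K(1)] by linarith
    also have "\<dots> < r" using r K(1) by simp
    finally show ?case by simp
  qed
qed

text \<open>The previous lemma applies to the partial integrals \<open>y \<mapsto> \<integral>F(x, y) dP\<^sub>n(x) - \<integral>F(x, y) dP(x)\<close>,
  which are uniformly equicontinuous and converge pointwise to 0.\<close>
lemma weak_conv_pair_measure_integral_tendsto: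
  fixes F :: "'a::{metric_space, second_countable_topology} \<times> 'a \<Rightarrow> real"
  assumes P: "prob_space P" "sets P = sets borel"
    and Ps: "\<And>n. prob_space (Ps n)" "\<And>n. sets (Ps n) = sets borel"
    and weak: "weak_conv_metric Ps P"
    and cont: "continuous_on UNIV F" and bounded: "\<And>z. \<bar>F z\<bar> \<le> B"
    and equicont: "\<And>\<eta>. 0 < \<eta> \<Longrightarrow> \<exists>\<delta>>0. \<forall>x y y'. dist y y' < \<delta> \<longrightarrow> \<bar>F (x, y) - F (x, y')\<bar> \<le> \<eta>"
  shows "(\<lambda>n. \<integral>z. F z \<partial>(Ps n \<Otimes>\<^sub>M Ps n)) \<longlonglongrightarrow> (\<integral>z. F z \<partial>(P \<Otimes>\<^sub>M P))"
proof -
  define T where "T M y = (\<integral>x. F (x, y) \<partial>M)" for M y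
  have F_cont: "continuous_on UNIV (\<lambda>x. F (x, y))" for y
    by (intro continuous_on_compose2[OF cont] continuous_intros) auto
  have F_meas: "(\<lambda>x. F (x, y)) \<in> borel_measurable M" if "sets M = sets borel" for M y
    using borel_measurable_sets_borel[OF that borel_measurable_continuous_onI[OF F_cont]] .
  have T_bound: "\<bar>T M y\<bar> \<le> B" if "prob_space M" "sets M = sets borel" for M y
    unfolding T_def using that(1) F_meas[OF that(2)] bounded by (rule prob_space_abs_integral_le)
  have T_diff: "\<bar>T M y - T M y'\<bar> \<le> \<eta>"
    if M: "prob_space M" "sets M = sets borel" and close: "\<forall>x. \<bar>F (x, y) - F (x, y')\<bar> \<le> \<eta>"
    for M y y' \<eta>
  proof -
    have "integrable M (\<lambda>x. F (x, y))" for y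
      using M(1) F_meas[OF M(2)] bounded by (rule prob_space_integrable_bounded)
    then have "T M y - T M y' = (\<integral>x. F (x, y) - F (x, y') \<partial>M)"
      unfolding T_def by simp
    also have "\<bar>\<dots>\<bar> \<le> \<eta>"
      using M(1) close F_meas[OF M(2)] by (intro prob_space_abs_integral_le) auto
    finally show ?thesis .
  qed
  have T_cont: "continuous_on UNIV (T M)" if M: "prob_space M" "sets M = sets borel" for M
    unfolding continuous_on_iff
  proof (intro ballI allI impI)
    fix y :: 'a and \<epsilon> :: real
    assume "0 < \<epsilon>"
    then obtain \<delta> where "0 < \<delta>" and \<delta>: "\<forall>x y y'. dist y y' < \<delta> \<longrightarrow> \<bar>F (x, y) - F (x, y')\<bar> \<le> \<epsilon> / 2"
      using equicont[of "\<epsilon> / 2"] by auto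
    then have "dist (T M y') (T M y) < \<epsilon>" if "dist y' y < \<delta>" for y'
      using T_diff[OF M, of y' y "\<epsilon> / 2"] that \<open>0 < \<epsilon>\<close> by (simp add: dist_real_def)
    then show "\<exists>\<delta>>0. \<forall>y'\<in>UNIV. dist y' y < \<delta> \<longrightarrow> dist (T M y') (T M y) < \<epsilon>"
      using \<open>0 < \<delta>\<close> by blast
  qed
  have "(\<lambda>n. \<integral>y. T (Ps n) y - T P y \<partial>Ps n) \<longlonglongrightarrow> 0"
  proof (rule weak_conv_equicontinuous_integral_tendsto_0[OF P Ps weak])
    show "\<bar>T (Ps n) y - T P y\<bar> \<le> 2 * B" for n y
      using T_bound[OF Ps, of n y] T_bound[OF P, of y] by linarith
    show "(\<lambda>y. T (Ps n) y - T P y) \<in> borel_measurable borel" for n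
      by (intro borel_measurable_continuous_onI continuous_on_diff T_cont P Ps)
    show "\<exists>\<delta>>0. \<forall>n y y'. dist y y' < \<delta> \<longrightarrow> \<bar>(T (Ps n) y - T P y) - (T (Ps n) y' - T P y')\<bar> \<le> \<eta>"
      if "0 < \<eta>" for \<eta>
    proof -
      obtain \<delta> where "0 < \<delta>" and \<delta>: "\<forall>x y y'. dist y y' < \<delta> \<longrightarrow> \<bar>F (x, y) - F (x, y')\<bar> \<le> \<eta> / 2"
        using equicont[of "\<eta> / 2"] \<open>0 < \<eta>\<close> by auto
      have "\<bar>(T (Ps n) y - T P y) - (T (Ps n) y' - T P y')\<bar> \<le> \<eta>" if "dist y y' < \<delta>" for n y y'
      proof -
        have "\<bar>T (Ps n) y - T (Ps n) y'\<bar> \<le> \<eta> / 2" "\<bar>T P y - T P y'\<bar> \<le> \<eta> / 2"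
          using \<delta> that by (intro T_diff P Ps; simp)+
        then show ?thesis by linarith
      qed
      then show ?thesis using \<open>0 < \<delta>\<close> by blast
    qed
    show "(\<lambda>n. T (Ps n) y - T P y) \<longlonglongrightarrow> 0" for y
      unfolding T_def using weak_conv_metric_tendsto[OF weak F_cont bounded] by (rule LIM_zero)
  qed
  moreover have "(\<lambda>n. \<integral>y. T P y \<partial>Ps n) \<longlonglongrightarrow> (\<integral>y. T P y \<partial>P)"
    using weak T_cont[OF P] T_bound[OF P] by (rule weak_conv_metric_tendsto)
  ultimately have "(\<lambda>n. (\<integral>y. T (Ps n) y - T P y \<partial>Ps n) + (\<integral>y. T P y \<partial>Ps n)) \<longlonglongrightarrow> 0 + (\<integral>y. T P y \<partial>P)"
    by (rule tendsto_add)
  moreover have "(\<integral>y. T (Ps n) y - T P y \<partial>Ps n) + (\<integral>y. T P y \<partial>Ps n) = (\<integral>y. T (Ps n) y \<partial>Ps n)" for n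
  proof -
    have "integrable (Ps n) (T M)" if "prob_space M" "sets M = sets borel" for M
      using Ps(1)
        borel_measurable_sets_borel[OF Ps(2) borel_measurable_continuous_onI[OF T_cont[OF that]]]
        T_bound[OF that] by (rule prob_space_integrable_bounded)
    then show ?thesis using P Ps by simp
  qed
  moreover have "(\<integral>z. F z \<partial>(M \<Otimes>\<^sub>M M)) = (\<integral>y. T M y \<partial>M)"
    if "prob_space M" "sets M = sets borel" for M
    unfolding T_def using that borel_measurable_continuous_onI[OF cont] bounded
    by (rule integral_pair_measure_iterated)
  ultimately show ?thesis using P Ps by simp
qed

section \<open>Continuity of the depth\<close>

lemma abs_integral_msd_h_minus_cut_le:
  fixes mu :: "'a::{metric_space, second_countable_topology}"
  assumes M: "prob_space M" "sets M = sets borel" and e: "0 < e"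
  shows "\<bar>(\<integral>z. msd_h (fst z) (snd z) mu \<partial>(M \<Otimes>\<^sub>M M)) - (\<integral>z. msd_h_cut mu e z \<partial>(M \<Otimes>\<^sub>M M))\<bar>
    \<le> 8 * (\<integral>x. ball_bump mu e x \<partial>M)"
proof -
  have MM: "prob_space (M \<Otimes>\<^sub>M M)" "sets (M \<Otimes>\<^sub>M M) = sets borel"
    using prob_space_pair[OF M(1) M(1)] sets_pair_measure_borel[OF M(2)] by auto
  have bump_meas: "ball_bump mu e \<in> borel_measurable borel"
    using continuous_on_ball_bump[OF e] by (rule borel_measurable_continuous_onI)
  have int_h: "integrable (M \<Otimes>\<^sub>M M) (\<lambda>z. msd_h (fst z) (snd z) mu)"
    using MM(1) borel_measurable_sets_borel[OF MM(2) borel_measurable_msd_h] abs_msd_h_le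
    by (rule prob_space_integrable_bounded)
  have cut_meas: "msd_h_cut mu e \<in> borel_measurable borel"
    using continuous_on_msd_h_cut[OF e] by (rule borel_measurable_continuous_onI)
  have int_cut: "integrable (M \<Otimes>\<^sub>M M) (msd_h_cut mu e)"
    using MM(1) borel_measurable_sets_borel[OF MM(2) cut_meas] abs_msd_h_cut_le[OF e]
    by (rule prob_space_integrable_bounded)
  have "(\<integral>z. msd_h (fst z) (snd z) mu \<partial>(M \<Otimes>\<^sub>M M)) - (\<integral>z. msd_h_cut mu e z \<partial>(M \<Otimes>\<^sub>M M))
      = (\<integral>z. msd_h (fst z) (snd z) mu - msd_h_cut mu e z \<partial>(M \<Otimes>\<^sub>M M))"
    using int_h int_cut by (rule Bochner_Integration.integral_diff[symmetric])
  also have "\<bar>\<dots>\<bar> \<le> (\<integral>z. 4 * (ball_bump mu e (fst z) + ball_bump mu e (snd z)) \<partial>(M \<Otimes>\<^sub>M M))"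
  proof (rule abs_integral_le_integral)
    show "integrable (M \<Otimes>\<^sub>M M) (\<lambda>z. msd_h (fst z) (snd z) mu - msd_h_cut mu e z)"
      using int_h int_cut by (rule Bochner_Integration.integrable_diff)
    show "integrable (M \<Otimes>\<^sub>M M) (\<lambda>z. 4 * (ball_bump mu e (fst z) + ball_bump mu e (snd z)))"
      using integral_pair_measure_marginals(1)[OF M bump_meas abs_ball_bump_le]
      by (rule integrable_mult_right)
  qed (rule abs_msd_h_minus_cut_le[OF e])
  also have "\<dots> = 8 * (\<integral>x. ball_bump mu e x \<partial>M)"
    unfolding integral_mult_right_zero
      integral_pair_measure_marginals(2)[OF M bump_meas abs_ball_bump_le]
    by simp
  finally show ?thesis .
qed

lemma integral_ball_bump_less:
  assumes P: "prob_space P" "sets P = sets borel" and null: "measure P {mu} = 0" and r: "0 < r"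
  obtains e where "0 < e" "(\<integral>x. ball_bump mu e x \<partial>P) < r"
proof -
  interpret prob_space P by fact
  have "{mu} \<in> null_sets P" using null P(2)
    by (intro null_setsI) (simp_all add: emeasure_eq_measure)
  then have "AE x in P. x \<noteq> mu" by (rule AE_I') auto
  then have "AE x in P. (\<lambda>k. ball_bump mu (1 / Suc k) x) \<longlonglongrightarrow> 0"
    by eventually_elim (rule ball_bump_tendsto_0)
  moreover have "ball_bump mu (1 / Suc k) \<in> borel_measurable P" for k
    using borel_measurable_sets_borel[OF P(2)
        borel_measurable_continuous_onI[OF continuous_on_ball_bump]]
    by simp
  moreover have "\<bar>ball_bump mu (1 / Suc k) x\<bar> \<le> 1" for k x
    by (rule abs_ball_bump_le)
  ultimately have "(\<lambda>k. \<integral>x. ball_bump mu (1 / Suc k) x \<partial>P) \<longlonglongrightarrow> 0"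
    using P(1) by (intro prob_space_integral_tendsto_0)
  then have "eventually (\<lambda>k. (\<integral>x. ball_bump mu (1 / Suc k) x \<partial>P) < r) sequentially"
    using r by (rule order_tendstoD)
  then obtain k where "(\<integral>x. ball_bump mu (1 / Suc k) x \<partial>P) < r"
    using eventually_happens'[OF sequentially_bot] by blast
  then show ?thesis using that[of "1 / Suc k"] by simp
qed

lemma tendsto_approximation:
  fixes a :: "nat \<Rightarrow> real"
  assumes "\<And>r. 0 < r \<Longrightarrow> \<exists>b B. b \<longlonglongrightarrow> B \<and> \<bar>A - B\<bar> \<le> r \<and> eventually (\<lambda>n. \<bar>a n - b n\<bar> \<le> r) sequentially"
  shows "a \<longlonglongrightarrow> A"
proof (rule tendstoI)
  fix r :: real
  assume "0 < r"
  then obtain b B where b: "b \<longlonglongrightarrow> B" and AB: "\<bar>A - B\<bar> \<le> r / 3"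
    and ab: "eventually (\<lambda>n. \<bar>a n - b n\<bar> \<le> r / 3) sequentially"
    using assms[of "r / 3"] by auto
  have "eventually (\<lambda>n. dist (b n) B < r / 3) sequentially"
    using b \<open>0 < r\<close> by (intro tendstoD) auto
  with ab show "eventually (\<lambda>n. dist (a n) A < r) sequentially"
  proof eventually_elim
    case (elim n)
    have "dist (a n) A \<le> dist (a n) (b n) + dist (b n) B + dist B A"
      using dist_triangle[of "a n" A "b n"] dist_triangle[of "b n" A B] by linarith
    then show ?case using elim AB abs_minus_commute[of A B] unfolding dist_real_def by linarith
  qed
qed

lemma integral_msd_h_tendsto:
  fixes mu :: "'a::{metric_space, second_countable_topology}"
  assumes P: "prob_space P" "sets P = sets borel" and null: "measure P {mu} = 0"
    and Ps: "\<And>n. prob_space (Ps n)" "\<And>n. sets (Ps n) = sets borel"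
    and weak: "weak_conv_metric Ps P"
  shows "(\<lambda>n. \<integral>z. msd_h (fst z) (snd z) mu \<partial>(Ps n \<Otimes>\<^sub>M Ps n))
    \<longlonglongrightarrow> (\<integral>z. msd_h (fst z) (snd z) mu \<partial>(P \<Otimes>\<^sub>M P))"
proof (rule tendsto_approximation)
  fix r :: real
  assume "0 < r"
  then obtain e where e: "0 < e" and small: "(\<integral>x. ball_bump mu e x \<partial>P) < r / 8"
    using integral_ball_bump_less[OF P null, of "r / 8"] by auto
  have "(\<lambda>n. \<integral>z. msd_h_cut mu e z \<partial>(Ps n \<Otimes>\<^sub>M Ps n)) \<longlonglongrightarrow> (\<integral>z. msd_h_cut mu e z \<partial>(P \<Otimes>\<^sub>M P))"
    using P Ps weak continuous_on_msd_h_cut[OF e] abs_msd_h_cut_le[OF e]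
      msd_h_cut_equicontinuous_snd[OF e]
    by (rule weak_conv_pair_measure_integral_tendsto)
  moreover have "\<bar>(\<integral>z. msd_h (fst z) (snd z) mu \<partial>(P \<Otimes>\<^sub>M P))
      - (\<integral>z. msd_h_cut mu e z \<partial>(P \<Otimes>\<^sub>M P))\<bar> \<le> r"
    using abs_integral_msd_h_minus_cut_le[OF P e, of mu] small by linarith
  moreover have "eventually (\<lambda>n. (\<integral>x. ball_bump mu e x \<partial>Ps n) < r / 8) sequentially"
    using weak_conv_metric_tendsto[OF weak continuous_on_ball_bump[OF e] abs_ball_bump_le] small
    by (rule order_tendstoD(2))
  then have "eventually (\<lambda>n. \<bar>(\<integral>z. msd_h (fst z) (snd z) mu \<partial>(Ps n \<Otimes>\<^sub>M Ps n))
      - (\<integral>z. msd_h_cut mu e z \<partial>(Ps n \<Otimes>\<^sub>M Ps n))\<bar> \<le> r) sequentially"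
  proof eventually_elim
    case (elim n)
    then show ?case using abs_integral_msd_h_minus_cut_le[OF Ps(1)[of n] Ps(2)[of n] e, of mu]
      by linarith
  qed
  ultimately show "\<exists>b B. b \<longlonglongrightarrow> B \<and> \<bar>(\<integral>z. msd_h (fst z) (snd z) mu \<partial>(P \<Otimes>\<^sub>M P)) - B\<bar> \<le> r
      \<and> eventually (\<lambda>n. \<bar>(\<integral>z. msd_h (fst z) (snd z) mu \<partial>(Ps n \<Otimes>\<^sub>M Ps n)) - b n\<bar> \<le> r) sequentially"
    by blast
qed

theorem theorem5:
  fixes mu :: "'a::polish_space"
    and P :: "'a measure"
    and Ps :: "nat \<Rightarrow> 'a measure"
  assumes "prob_space P" and "sets P = sets borel"
    and "measure P {mu} = 0"
    and "\<And>n. prob_space (Ps n)" and "\<And>n. sets (Ps n) = sets borel"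
    and "weak_conv_metric Ps P"
  shows "(\<lambda>n. metric_spatial_depth mu (Ps n)) \<longlonglongrightarrow> metric_spatial_depth mu P"
  unfolding metric_spatial_depth_def using integral_msd_h_tendsto[OF assms]
  by (intro tendsto_intros)

end
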